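(* Let $p,q\in(1,\infty)$. For Borel measures $\mu,\nu$ on $[0,D]$ let $A_D(\mu,\nu)$ be the optimal constant $$A_D(\mu,\nu)=\sup\Big\{\frac{(\int_0^D|f|^q d\mu)^{1/q}}{(\int_0^D|f'|^p d\nu)^{1/p}}:\ f\text{ absolutely continuous},\ f(0)=0,\ 0<\int_0^D|f'|^pd\nu<\infty\Big\}$$ and $B_D(\mu,\nu)=\sup_{x\in(0,D)}\hat\nu(0,x)^{1/p^*}\mu(x,D)^{1/q}$. Let $D<D'\le\infty$ and let $(\mu',\nu')$ be an extension of $(\mu,\nu)$ to $[0,D')$: $\mu'|_{[0,D]}=\mu$, $\nu'|_{[0,D]}=\nu$, and $\mu'|_{(D,D')}=0$. (1) If $A_{D'}(\mu',\nu')\le k\,B_{D'}(\mu',\nu')$ for a constant $k$, then $A_D(\mu,\nu)\le k\,B_D(\mu,\nu)$. (2) In particular, if the inequality $A_{D'}(\mu',\nu')\le k\,B_{D'}(\mu',\nu')$ holds for arbitrary (resp. absolutely continuous) pairs $(\mu',\nu')$, then $A_D(\mu,\nu)\le k\,B_D(\mu,\nu)$ holds for arbitrary (resp. absolutely continuous) pairs $(\mu,\nu)$.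
   Context: $p^*=p/(p-1)$. For a measure $\nu$, $v$ denotes the density of its absolutely continuous part with respect to Lebesgue measure, $\hat v=v^{-1/(p-1)}$, and $\hat\nu(\alpha,\beta)=\int_\alpha^\beta\hat v(x)\,dx$; $\mu(\alpha,\beta)$ is the $\mu$-measure of $(\alpha,\beta)$. On $[0,D')$ the quantities $A_{D'}$, $B_{D'}$ are defined analogously with $D$ replaced by $D'$. *)

theory Defs
  imports "HOL-Analysis.Analysis"
begin

definition enn_powr :: "ennreal \<Rightarrow> real \<Rightarrow> ennreal" where
  "enn_powr x a = (if x = top then top else ennreal (enn2real x powr a))"

text \<open>A Borel measure on the real line that lives on the set Om
  (i.e. a Borel measure on Om, extended by zero).\<close>
definition borel_measure_on :: "real set \<Rightarrow> real measure \<Rightarrow> bool" where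
  "borel_measure_on Om m \<longleftrightarrow> sets m = sets borel \<and> emeasure m (UNIV - Om) = 0"

text \<open>v is the density (w.r.t. Lebesgue measure) of the absolutely continuous part of nu
  in the Lebesgue decomposition nu = v dx + nu_s, nu_s concentrated on a Lebesgue null set S.\<close>
definition ac_part_density :: "real measure \<Rightarrow> (real \<Rightarrow> ennreal) \<Rightarrow> bool" where
  "ac_part_density nu v \<longleftrightarrow> v \<in> borel_measurable borel \<and>
     (\<exists>S\<in>sets borel. emeasure lborel S = 0 \<and>
        (\<forall>A\<in>sets borel. emeasure nu A = (\<integral>\<^sup>+x\<in>A. v x \<partial>lborel) + emeasure nu (A \<inter> S)))"

definition hat_dens :: "real \<Rightarrow> (real \<Rightarrow> ennreal) \<Rightarrow> real \<Rightarrow> ennreal" where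
  "hat_dens p v x = (if v x = 0 then top else if v x = top then 0
                     else ennreal (enn2real (v x) powr (- 1 / (p - 1))))"

definition hat_meas :: "real \<Rightarrow> (real \<Rightarrow> ennreal) \<Rightarrow> real \<Rightarrow> real \<Rightarrow> ennreal" where
  "hat_meas p v a b = (\<integral>\<^sup>+x\<in>{a<..<b}. hat_dens p v x \<partial>lborel)"

text \<open>Absolutely continuous f on the domain Om (an interval starting at 0) with f(0) = 0:
  f(x) = integral of g over [0,x], with g integrable on every [0,x], x in Om; g plays the role of f'.\<close>
definition prim :: "(real \<Rightarrow> real) \<Rightarrow> real \<Rightarrow> real" where
  "prim g x = integral {0..x} g"

definition admissible_deriv :: "real \<Rightarrow> real set \<Rightarrow> real measure \<Rightarrow> (real \<Rightarrow> real) \<Rightarrow> bool" where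
  "admissible_deriv p Om nu g \<longleftrightarrow> g \<in> borel_measurable borel \<and>
     (\<forall>x\<in>Om. g absolutely_integrable_on {0..x}) \<and>
     0 < (\<integral>\<^sup>+x. ennreal (\<bar>g x\<bar> powr p) \<partial>nu) \<and> (\<integral>\<^sup>+x. ennreal (\<bar>g x\<bar> powr p) \<partial>nu) < top"

definition hardyA :: "real \<Rightarrow> real \<Rightarrow> real set \<Rightarrow> real measure \<Rightarrow> real measure \<Rightarrow> ennreal" where
  "hardyA p q Om mu nu =
     (SUP g\<in>{g. admissible_deriv p Om nu g}.
        enn_powr (\<integral>\<^sup>+x. ennreal (\<bar>prim g x\<bar> powr q) \<partial>mu) (1 / q)
        / enn_powr (\<integral>\<^sup>+x. ennreal (\<bar>g x\<bar> powr p) \<partial>nu) (1 / p))"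

text \<open>Muckenhoupt-type quantity B for the domain with right endpoint E:
  sup over 0 < x < E of hat nu(0,x)^(1/p*) mu(tail beyond x)^(1/q), with 1/p* = (p-1)/p.\<close>
definition hardyB :: "real \<Rightarrow> real \<Rightarrow> ereal \<Rightarrow> real measure \<Rightarrow> (real \<Rightarrow> ennreal) \<Rightarrow> ennreal" where
  "hardyB p q E mu v =
     (SUP x\<in>{x. 0 < x \<and> ereal x < E}.
        enn_powr (hat_meas p v 0 x) ((p - 1) / p) * enn_powr (emeasure mu {x<..}) (1 / q))"

definition half_dom :: "ereal \<Rightarrow> real set" where
  "half_dom D' = {x. 0 \<le> x \<and> ereal x < D'}"

definition is_extension :: "real \<Rightarrow> ereal \<Rightarrow> real measure \<Rightarrow> real measure \<Rightarrow> real measure \<Rightarrow> real measure \<Rightarrow> bool" where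
  "is_extension D D' mu nu mu' nu' \<longleftrightarrow>
     (\<forall>A\<in>sets borel. A \<subseteq> {0..D} \<longrightarrow> emeasure mu' A = emeasure mu A \<and> emeasure nu' A = emeasure nu A) \<and>
     emeasure mu' {x. D < x \<and> ereal x < D'} = 0"

end

theory Submission
  imports Defs
begin

text \<open>Extending an admissible derivative g on [0,D] by zero beyond D gives an admissible
  derivative on [0,D') with the same two norms, since \<mu>' = \<mu> has no mass beyond D and \<nu>' = \<nu>
  on [0,D]; hence A_D \<le> A_D'. Conversely B_D' = B_D: the densities of the absolutely continuous parts
  of \<nu> and \<nu>' agree almost everywhere on [0,D], and \<mu>(x,\<infinity>) = 0 for x \<ge> D. Part (2) follows
  because (\<mu>,\<nu>) is an extension of itself.\<close>

lemma borel_measure_on_AE: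
  assumes "borel_measure_on Om m" "Om \<in> sets borel"
  shows "AE x in m. x \<in> Om"
  using assms by (intro AE_I'[of "UNIV - Om"]) (auto simp: borel_measure_on_def null_sets_def)

lemma borel_measure_on_mono:
  assumes "borel_measure_on A m" "A \<subseteq> B" "A \<in> sets borel" "B \<in> sets borel"
  shows "borel_measure_on B m"
proof -
  have "emeasure m (UNIV - B) \<le> emeasure m (UNIV - A)"
    using assms by (intro emeasure_mono) (auto simp: borel_measure_on_def)
  then show ?thesis using assms(1) by (simp add: borel_measure_on_def)
qed

lemma emeasure_greaterThan_eq_0:
  assumes "borel_measure_on {a..b} m" "b \<le> x"
  shows "emeasure m {x<..} = 0"
proof -
  have "emeasure m {x<..} \<le> emeasure m (UNIV - {a..b})"
    using assms by (intro emeasure_mono) (auto simp: borel_measure_on_def)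
  then show ?thesis using assms(1) by (simp add: borel_measure_on_def)
qed

lemma measure_eq_if_agree_on_support:
  assumes "sets m = sets borel" "sets m' = sets borel" "Om \<in> sets borel"
    and "emeasure m (UNIV - Om) = 0" "emeasure m' (UNIV - Om) = 0"
    and agree: "\<And>A. A \<in> sets borel \<Longrightarrow> A \<subseteq> Om \<Longrightarrow> emeasure m' A = emeasure m A"
  shows "m' = m"
proof (rule measure_eqI)
  fix A assume "A \<in> sets m'"
  then have A: "A \<in> sets borel" using assms(2) by simp
  have null: "UNIV - Om \<in> null_sets m" "UNIV - Om \<in> null_sets m'"
    using assms by (auto simp: null_sets_def)
  have "emeasure m' A = emeasure m' (A - (UNIV - Om))"
    using null A assms(2) by (simp add: emeasure_Diff_null_set)
  also have "\<dots> = emeasure m (A - (UNIV - Om))"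
    using A assms(3) by (intro agree) auto
  also have "\<dots> = emeasure m A"
    using null A assms(1) by (simp add: emeasure_Diff_null_set)
  finally show "emeasure m' A = emeasure m A" .
qed (use assms in simp)

lemma restrict_space_eq_if_agree:
  assumes "sets m = sets borel" "sets m' = sets borel" "Om \<in> sets borel"
    and agree: "\<And>A. A \<in> sets borel \<Longrightarrow> A \<subseteq> Om \<Longrightarrow> emeasure m' A = emeasure m A"
  shows "restrict_space m' Om = restrict_space m Om"
proof (rule measure_eqI)
  fix A assume "A \<in> sets (restrict_space m' Om)"
  then have "A \<in> sets borel" "A \<subseteq> Om"
    using assms(2,3) sets_restrict_space_iff[of Om m'] by auto
  then show "emeasure (restrict_space m' Om) A = emeasure (restrict_space m Om) A"
    using assms sets_eq_imp_space_eq[OF assms(1)] sets_eq_imp_space_eq[OF assms(2)]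
    by (simp add: emeasure_restrict_space)
qed (use assms in \<open>simp add: sets_restrict_space\<close>)

lemma nn_integral_indicator_eq_if_agree:
  assumes "sets m = sets borel" "sets m' = sets borel" "Om \<in> sets borel"
    and "\<And>A. A \<in> sets borel \<Longrightarrow> A \<subseteq> Om \<Longrightarrow> emeasure m' A = emeasure m A"
  shows "(\<integral>\<^sup>+x. f x * indicator Om x \<partial>m') = (\<integral>\<^sup>+x. f x * indicator Om x \<partial>m)"
proof -
  have "(\<integral>\<^sup>+x. f x * indicator Om x \<partial>m') = (\<integral>\<^sup>+x. f x \<partial>restrict_space m' Om)"
    using assms(2,3) by (subst nn_integral_restrict_space) auto
  also have "\<dots> = (\<integral>\<^sup>+x. f x \<partial>restrict_space m Om)"
    using restrict_space_eq_if_agree[OF assms] by simp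
  also have "\<dots> = (\<integral>\<^sup>+x. f x * indicator Om x \<partial>m)"
    using assms(1,3) by (subst nn_integral_restrict_space) auto
  finally show ?thesis .
qed

lemma ac_part_density_AE_eq:
  assumes v: "ac_part_density nu v" and v': "ac_part_density nu' v'" and T: "T \<in> sets borel"
    and agree: "\<And>A. A \<in> sets borel \<Longrightarrow> A \<subseteq> T \<Longrightarrow> emeasure nu' A = emeasure nu A"
  shows "AE x in lborel. x \<in> T \<longrightarrow> v' x = v x"
proof -
  obtain S where S: "S \<in> sets borel" "emeasure lborel S = 0" and vm: "v \<in> borel_measurable borel"
    and decomp: "\<And>A. A \<in> sets borel \<Longrightarrow> emeasure nu A = (\<integral>\<^sup>+x\<in>A. v x \<partial>lborel) + emeasure nu (A \<inter> S)"
    using v unfolding ac_part_density_def by blast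
  obtain S' where S': "S' \<in> sets borel" "emeasure lborel S' = 0" and vm': "v' \<in> borel_measurable borel"
    and decomp': "\<And>A. A \<in> sets borel \<Longrightarrow> emeasure nu' A = (\<integral>\<^sup>+x\<in>A. v' x \<partial>lborel) + emeasure nu' (A \<inter> S')"
    using v' unfolding ac_part_density_def by blast
  define R where "R = T - (S \<union> S')"
  have R: "R \<in> sets borel" using S S' T by (auto simp: R_def)
  have "density lborel (\<lambda>x. v' x * indicator R x) = density lborel (\<lambda>x. v x * indicator R x)"
  proof (rule measure_eqI)
    fix A assume "A \<in> sets (density lborel (\<lambda>x. v' x * indicator R x))"
    then have A: "A \<in> sets borel" "A \<inter> R \<in> sets borel" "A \<inter> R \<subseteq> T" "A \<inter> R \<inter> S = {}" "A \<inter> R \<inter> S' = {}"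
      using R by (auto simp: R_def)
    have "emeasure (density lborel (\<lambda>x. v' x * indicator R x)) A = (\<integral>\<^sup>+x\<in>A \<inter> R. v' x \<partial>lborel)"
      using A vm' R by (subst emeasure_density) (auto intro!: nn_integral_cong split: split_indicator)
    also have "\<dots> = emeasure nu' (A \<inter> R)" using decomp'[OF A(2)] A by simp
    also have "\<dots> = emeasure nu (A \<inter> R)" using A by (intro agree)
    also have "\<dots> = (\<integral>\<^sup>+x\<in>A \<inter> R. v x \<partial>lborel)" using decomp[OF A(2)] A by simp
    also have "\<dots> = emeasure (density lborel (\<lambda>x. v x * indicator R x)) A"
      using A vm R by (subst emeasure_density) (auto intro!: nn_integral_cong split: split_indicator)
    finally show "emeasure (density lborel (\<lambda>x. v' x * indicator R x)) A
        = emeasure (density lborel (\<lambda>x. v x * indicator R x)) A" .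
  qed simp
  then have "AE x in lborel. v' x * indicator R x = v x * indicator R x"
    using vm vm' R by (intro sigma_finite_measure.density_unique[OF sigma_finite_lborel]) auto
  moreover have "AE x in lborel. x \<notin> S \<union> S'"
    using S S' by (intro AE_not_in null_sets.Un) (auto simp: null_sets_def)
  ultimately show ?thesis by eventually_elim (auto simp: R_def)
qed

lemma hat_meas_cong_AE:
  assumes "AE x in lborel. x \<in> {a<..<b} \<longrightarrow> v' x = v x"
  shows "hat_meas p v' a b = hat_meas p v a b"
  unfolding hat_meas_def
  using assms by (intro nn_integral_cong_AE) (auto simp: hat_dens_def split: split_indicator)

lemma hardyA_le_zero_extension:
  assumes "0 \<le> D" and mu: "borel_measure_on {0..D} mu" and nu: "borel_measure_on {0..D} nu"
    and "sets nu' = sets borel"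
    and agree: "\<And>A. A \<in> sets borel \<Longrightarrow> A \<subseteq> {0..D} \<Longrightarrow> emeasure nu' A = emeasure nu A"
  shows "hardyA p q {0..D} mu nu \<le> hardyA p q Om mu nu'"
proof -
  have mu_AE: "AE x in mu. x \<in> {0..D}" and nu_AE: "AE x in nu. x \<in> {0..D}"
    by (rule borel_measure_on_AE[OF mu], simp, rule borel_measure_on_AE[OF nu], simp)
  have zero_extension:
    "admissible_deriv p Om nu' g0 \<and>
     (\<integral>\<^sup>+x. ennreal (\<bar>prim g0 x\<bar> powr q) \<partial>mu) = (\<integral>\<^sup>+x. ennreal (\<bar>prim g x\<bar> powr q) \<partial>mu) \<and>
     (\<integral>\<^sup>+x. ennreal (\<bar>g0 x\<bar> powr p) \<partial>nu') = (\<integral>\<^sup>+x. ennreal (\<bar>g x\<bar> powr p) \<partial>nu)"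
    if adm: "admissible_deriv p {0..D} nu g" and g0_def: "g0 = (\<lambda>y. if y \<in> {0..D} then g y else 0)"
    for g g0
  proof (intro conjI)
    have "g absolutely_integrable_on {0..D}"
      using adm \<open>0 \<le> D\<close> by (simp add: admissible_deriv_def)
    then have "g0 absolutely_integrable_on UNIV"
      unfolding g0_def by (rule absolutely_integrable_restrict_UNIV[THEN iffD2])
    then have g0_int: "g0 absolutely_integrable_on {0..x}" for x
      by (rule absolutely_integrable_on_subinterval) simp
    have "(\<integral>\<^sup>+x. ennreal (\<bar>g0 x\<bar> powr p) \<partial>nu') = (\<integral>\<^sup>+x\<in>{0..D}. ennreal (\<bar>g x\<bar> powr p) \<partial>nu')"
      by (intro nn_integral_cong) (auto simp: g0_def split: split_indicator)
    also have "\<dots> = (\<integral>\<^sup>+x\<in>{0..D}. ennreal (\<bar>g x\<bar> powr p) \<partial>nu)"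
      using nu assms(4) by (intro nn_integral_indicator_eq_if_agree agree) (auto simp: borel_measure_on_def)
    also have "\<dots> = (\<integral>\<^sup>+x. ennreal (\<bar>g x\<bar> powr p) \<partial>nu)"
      using nu_AE by (intro nn_integral_cong_AE) (auto split: split_indicator)
    finally show g0_norm: "(\<integral>\<^sup>+x. ennreal (\<bar>g0 x\<bar> powr p) \<partial>nu') = (\<integral>\<^sup>+x. ennreal (\<bar>g x\<bar> powr p) \<partial>nu)" .
    have "g \<in> borel_measurable borel"
      using adm by (simp add: admissible_deriv_def)
    then have "g0 \<in> borel_measurable borel"
      unfolding g0_def by measurable
    then show "admissible_deriv p Om nu' g0"
      using adm g0_int g0_norm by (simp add: admissible_deriv_def)
    have "AE x in mu. prim g0 x = prim g x"
      using mu_AE unfolding prim_def g0_def by eventually_elim (auto intro!: integral_cong)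
    then show "(\<integral>\<^sup>+x. ennreal (\<bar>prim g0 x\<bar> powr q) \<partial>mu) = (\<integral>\<^sup>+x. ennreal (\<bar>prim g x\<bar> powr q) \<partial>mu)"
      by (intro nn_integral_cong_AE) auto
  qed
  show ?thesis
    unfolding hardyA_def by (intro SUP_mono) (use zero_extension in fastforce)
qed

lemma hardyB_extension_eq:
  assumes "ereal D < D'" and mu: "borel_measure_on {0..D} mu"
    and v: "AE x in lborel. x \<in> {0..D} \<longrightarrow> v' x = v x"
  shows "hardyB p q D' mu v' = hardyB p q (ereal D) mu v"
proof -
  let ?b = "\<lambda>v x. enn_powr (hat_meas p v 0 x) ((p - 1) / p) * enn_powr (emeasure mu {x<..}) (1 / q)"
  have hat_eq: "hat_meas p v' 0 x = hat_meas p v 0 x" if "x \<le> D" for x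
    using v that by (intro hat_meas_cong_AE) auto
  have "?b v' x \<le> (SUP x\<in>{x. 0 < x \<and> ereal x < ereal D}. ?b v x)" if "0 < x" for x
  proof (cases "x < D")
    case True
    then show ?thesis using that hat_eq[of x] by (intro SUP_upper2[of x]) auto
  next
    case False
    then show ?thesis using emeasure_greaterThan_eq_0[OF mu, of x] by (simp add: enn_powr_def)
  qed
  then have "(SUP x\<in>{x. 0 < x \<and> ereal x < D'}. ?b v' x) \<le> (SUP x\<in>{x. 0 < x \<and> ereal x < ereal D}. ?b v x)"
    by (intro SUP_least) auto
  moreover have "(SUP x\<in>{x. 0 < x \<and> ereal x < ereal D}. ?b v x) \<le> (SUP x\<in>{x. 0 < x \<and> ereal x < D'}. ?b v' x)"
    using hat_eq by (intro SUP_subset_mono) (auto intro: order.strict_trans[OF _ assms(1)])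
  ultimately show ?thesis
    unfolding hardyB_def by (rule antisym)
qed

lemma half_dom_borel [measurable]: "half_dom D' \<in> sets borel"
  unfolding half_dom_def by measurable

lemma Icc_subset_half_dom: "ereal D < D' \<Longrightarrow> {0..D} \<subseteq> half_dom D'"
  by (auto simp: half_dom_def intro: order.strict_trans1[of _ "ereal D"])

lemma borel_measure_on_half_dom:
  "ereal D < D' \<Longrightarrow> borel_measure_on {0..D} m \<Longrightarrow> borel_measure_on (half_dom D') m"
  by (erule borel_measure_on_mono) (simp_all add: Icc_subset_half_dom)

lemma extension_borel_measure_on:
  assumes "ereal D < D'" "borel_measure_on (half_dom D') mu'" "is_extension D D' mu nu mu' nu'"
  shows "borel_measure_on {0..D} mu'"
proof -
  have sets: "sets mu' = sets borel" using assms(2) by (simp add: borel_measure_on_def)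
  have "UNIV - {0..D} = (UNIV - half_dom D') \<union> {x. D < x \<and> ereal x < D'}"
    using Icc_subset_half_dom[OF assms(1)] by (auto simp: half_dom_def)
  then have "emeasure mu' (UNIV - {0..D})
      \<le> emeasure mu' (UNIV - half_dom D') + emeasure mu' {x. D < x \<and> ereal x < D'}"
    using sets by (simp add: emeasure_subadditive)
  then show ?thesis
    using assms(2,3) sets by (simp add: borel_measure_on_def is_extension_def)
qed

lemma extension_measure_eq:
  assumes "ereal D < D'" "borel_measure_on {0..D} mu" "borel_measure_on (half_dom D') mu'"
    and "is_extension D D' mu nu mu' nu'"
  shows "mu' = mu"
  using extension_borel_measure_on[OF assms(1,3,4)] assms(2,4)
  by (intro measure_eq_if_agree_on_support[of _ _ "{0..D}"])
    (auto simp: borel_measure_on_def is_extension_def)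

lemma is_extension_self:
  assumes "ereal D < D'" "borel_measure_on {0..D} mu"
  shows "is_extension D D' mu nu mu nu"
proof -
  have "emeasure mu {x. D < x \<and> ereal x < D'} \<le> emeasure mu (UNIV - {0..D})"
    using assms(2) by (intro emeasure_mono) (auto simp: borel_measure_on_def)
  then show ?thesis using assms(2) by (simp add: is_extension_def borel_measure_on_def)
qed

lemma hardy_bound_restrict_extension:
  assumes "0 \<le> D" "ereal D < D'"
    and mu: "borel_measure_on {0..D} mu" and nu: "borel_measure_on {0..D} nu" and v: "ac_part_density nu v"
    and mu': "borel_measure_on (half_dom D') mu'" and nu': "borel_measure_on (half_dom D') nu'"
    and v': "ac_part_density nu' v'" and ext: "is_extension D D' mu nu mu' nu'"
    and bound: "enn2ereal (hardyA p q (half_dom D') mu' nu') \<le> ereal k * enn2ereal (hardyB p q D' mu' v')"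
  shows "enn2ereal (hardyA p q {0..D} mu nu) \<le> ereal k * enn2ereal (hardyB p q (ereal D) mu v)"
proof -
  have mu_eq: "mu' = mu" using extension_measure_eq[OF assms(2) mu mu' ext] .
  have agree: "emeasure nu' A = emeasure nu A" if "A \<in> sets borel" "A \<subseteq> {0..D}" for A
    using ext that by (simp add: is_extension_def)
  have "hardyA p q {0..D} mu nu \<le> hardyA p q (half_dom D') mu' nu'"
    unfolding mu_eq using assms(1) mu nu nu' agree
    by (intro hardyA_le_zero_extension) (auto simp: borel_measure_on_def)
  moreover have "AE x in lborel. x \<in> {0..D} \<longrightarrow> v' x = v x"
    using agree by (intro ac_part_density_AE_eq[OF v v']) auto
  then have "hardyB p q D' mu' v' = hardyB p q (ereal D) mu v"
    unfolding mu_eq using assms(2) mu by (intro hardyB_extension_eq)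
  ultimately show ?thesis
    using bound by (metis less_eq_ennreal.rep_eq order.trans)
qed

theorem lemma4p2:
  fixes p q k D :: real and D' :: ereal
  assumes "1 < p" and "1 < q" and "0 < D" and "ereal D < D'"
  shows
    "(\<forall>mu nu v mu' nu' v'.
        borel_measure_on {0..D} mu \<and> borel_measure_on {0..D} nu \<and> ac_part_density nu v \<and>
        borel_measure_on (half_dom D') mu' \<and> borel_measure_on (half_dom D') nu' \<and> ac_part_density nu' v' \<and>
        is_extension D D' mu nu mu' nu' \<and>
        enn2ereal (hardyA p q (half_dom D') mu' nu') \<le> ereal k * enn2ereal (hardyB p q D' mu' v')
        \<longrightarrow> enn2ereal (hardyA p q {0..D} mu nu) \<le> ereal k * enn2ereal (hardyB p q (ereal D) mu v))
     \<and>
     ((\<forall>mu' nu' v'.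
        borel_measure_on (half_dom D') mu' \<and> borel_measure_on (half_dom D') nu' \<and> ac_part_density nu' v'
        \<longrightarrow> enn2ereal (hardyA p q (half_dom D') mu' nu') \<le> ereal k * enn2ereal (hardyB p q D' mu' v'))
      \<longrightarrow> (\<forall>mu nu v.
        borel_measure_on {0..D} mu \<and> borel_measure_on {0..D} nu \<and> ac_part_density nu v
        \<longrightarrow> enn2ereal (hardyA p q {0..D} mu nu) \<le> ereal k * enn2ereal (hardyB p q (ereal D) mu v)))
     \<and>
     ((\<forall>mu' nu' v'.
        borel_measure_on (half_dom D') mu' \<and> borel_measure_on (half_dom D') nu' \<and> ac_part_density nu' v' \<and>
        absolutely_continuous lborel mu' \<and> absolutely_continuous lborel nu'
        \<longrightarrow> enn2ereal (hardyA p q (half_dom D') mu' nu') \<le> ereal k * enn2ereal (hardyB p q D' mu' v'))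
      \<longrightarrow> (\<forall>mu nu v.
        borel_measure_on {0..D} mu \<and> borel_measure_on {0..D} nu \<and> ac_part_density nu v \<and>
        absolutely_continuous lborel mu \<and> absolutely_continuous lborel nu
        \<longrightarrow> enn2ereal (hardyA p q {0..D} mu nu) \<le> ereal k * enn2ereal (hardyB p q (ereal D) mu v)))"
proof -
  note restrict = hardy_bound_restrict_extension[OF less_imp_le[OF \<open>0 < D\<close>] \<open>ereal D < D'\<close>]
  have self_extension: "borel_measure_on (half_dom D') mu \<and> borel_measure_on (half_dom D') nu \<and>
      is_extension D D' mu nu mu nu"
    if "borel_measure_on {0..D} mu" "borel_measure_on {0..D} nu" for mu nu :: "real measure"
    using that \<open>ereal D < D'\<close> by (simp add: borel_measure_on_half_dom is_extension_self)
  show ?thesis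
    by (intro conjI allI impI; elim conjE; rule restrict; use self_extension in blast)
qed

end
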